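(* If there exists a depth assignment $d:\Sigma^n\to\Sigma$ such that (i) every pair of strings $s,t\in\Sigma^n$ with $d_s\ne d_t$ share a symbol, and (ii) the valid subgraph of $B_n$ has a Hamiltonian cycle, then that cycle $s_0,s_1,\dots,s_{N-1}$ (with $N=k^n$) corresponds to a de Bruijn sequence $s_0[0]s_1[0]\cdots s_{N-1}[0]$ of order $n$ whose discrepancy is at most $n$.
   Context: Let $k\ge 1$ be an integer, $\Sigma=\{0,1,\dots,k-1\}$ with arithmetic on symbols taken modulo $k$, and $n\ge 1$. For $s\in\Sigma^n$ write $s=s[0]\cdots s[n-1]$. The de Bruijn graph $B_n$ has node set $\Sigma^n$ and an arc $(s,t)$ iff $s[1]\cdots s[n-1]=t[0]\cdots t[n-2]$. A depth assignment is any function $d:\Sigma^n\to\Sigma$, written $s\mapsto d_s$. An arc $(s,t)$ of $B_n$ is valid (with respect to $d$) if, with $b=s[0]$ and $c=t[n-1]$, either ($b+1=c$ and $d_s=d_t$) or ($b+1=d_t$ and $c=d_s$); the valid arcs form the valid subgraph. Two strings share a symbol if some $c\in\Sigma$ occurs in both. A de Bruijn sequence of order $n$ is a circular string of length $k^n$ in which every string in $\Sigma^n$ occurs exactly once. The discrepancy of a string $w$ is the maximum over all substrings $s$ of $w$ (viewed circularly) of $\max_{a\in\Sigma}|s|_a-\min_{c\in\Sigma}|s|_c$, where $|s|_a$ is the number of occurrences of $a$ in $s$. *)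

theory Defs
  imports Main
begin

definition strings :: "nat \<Rightarrow> nat \<Rightarrow> nat list set" where
  "strings k n = {s. length s = n \<and> set s \<subseteq> {..<k}}"

definition db_arc :: "nat \<Rightarrow> nat \<Rightarrow> nat list \<Rightarrow> nat list \<Rightarrow> bool" where
  "db_arc k n s t \<longleftrightarrow> s \<in> strings k n \<and> t \<in> strings k n \<and> drop 1 s = take (n - 1) t"

definition valid_arc :: "nat \<Rightarrow> nat \<Rightarrow> (nat list \<Rightarrow> nat) \<Rightarrow> nat list \<Rightarrow> nat list \<Rightarrow> bool" where
  "valid_arc k n d s t \<longleftrightarrow> db_arc k n s t \<and>
     (let b = s ! 0; c = t ! (n - 1) in
       ((b + 1) mod k = c \<and> d s = d t) \<or> ((b + 1) mod k = d t \<and> c = d s))"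

definition ham_cycle_valid :: "nat \<Rightarrow> nat \<Rightarrow> (nat list \<Rightarrow> nat) \<Rightarrow> nat list list \<Rightarrow> bool" where
  "ham_cycle_valid k n d cyc \<longleftrightarrow> distinct cyc \<and> set cyc = strings k n \<and>
     (\<forall>i < length cyc. valid_arc k n d (cyc ! i) (cyc ! ((i + 1) mod length cyc)))"

definition circ_sub :: "nat list \<Rightarrow> nat \<Rightarrow> nat \<Rightarrow> nat list" where
  "circ_sub w i l = map (\<lambda>j. w ! ((i + j) mod length w)) [0..<l]"

definition de_bruijn_seq :: "nat \<Rightarrow> nat \<Rightarrow> nat list \<Rightarrow> bool" where
  "de_bruijn_seq k n w \<longleftrightarrow> length w = k ^ n \<and> set w \<subseteq> {..<k} \<and>
     (\<forall>x \<in> strings k n. card {i. i < length w \<and> circ_sub w i n = x} = 1)"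

definition circ_substrings :: "nat list \<Rightarrow> nat list set" where
  "circ_substrings w = {circ_sub w i l | i l. i < length w \<and> l \<le> length w}"

definition imbalance :: "nat \<Rightarrow> nat list \<Rightarrow> int" where
  "imbalance k s = int (Max {count_list s a | a. a < k}) - int (Min {count_list s c | c. c < k})"

definition discrepancy :: "nat \<Rightarrow> nat list \<Rightarrow> int" where
  "discrepancy k w = Max (imbalance k ` circ_substrings w)"

end

theory Submission
  imports Defs "HOL-Number_Theory.Cong"
begin

(* Give every string s of length n the weight vector W_s(a) = |s|_a + [d_s = a], of total mass
   n + 1. Along a valid arc s -> t with b = s[0], both alternatives in the definition of validity
   give W_t = W_s - e_b + e_(b+1): one unit of weight moves from b to b + 1. So if u is the
   circular factor read while walking from s to t, then W_t(a) - W_s(a) = |u|_(a-1) - |u|_a, and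
   telescoping around the cyclic alphabet writes |u|_a - |u|_c as the W_t-mass minus the W_s-mass
   of the cyclic interval (a, c]. Condition (i) provides a symbol e with W_s(e), W_t(e) >= 1;
   whether or not e lies in that interval, the difference is at most n. *)

lemma inj_on_add_mod: "inj_on (\<lambda>j. (a + j) mod k) {..<k::nat}"
proof (rule inj_onI)
  fix i j assume "i \<in> {..<k}" "j \<in> {..<k}" "(a + i) mod k = (a + j) mod k"
  then show "i = j"
    by (metis cong_add_lcancel_nat cong_def cong_less_modulus_unique_nat lessThan_iff)
qed

lemma bij_betw_add_mod: "bij_betw (\<lambda>j. (a + j) mod k) {..<k} {..<k::nat}"
proof -
  have "(\<lambda>j. (a + j) mod k) ` {..<k} = {..<k}"
    by (rule endo_inj_surj) (auto simp: inj_on_add_mod)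
  then show ?thesis by (simp add: bij_betw_def inj_on_add_mod)
qed

lemma pred_mod_Suc_mod:
  assumes "0 < k"
  shows "(Suc j mod k + k - 1) mod k = j mod (k::nat)"
proof -
  have "Suc j mod k + k - 1 = Suc j mod k + (k - 1)" using assms by simp
  then have "(Suc j mod k + k - 1) mod k = (Suc j + (k - 1)) mod k"
    by (simp only: mod_add_left_eq)
  also have "Suc j + (k - 1) = j + k" using assms by simp
  finally show ?thesis by simp
qed

lemma Suc_mod_eq_iff_pred_mod:
  assumes "a < k" "b < (k::nat)"
  shows "(b + 1) mod k = a \<longleftrightarrow> (a + k - 1) mod k = b"
proof (cases "b + 1 = k")
  case True
  then show ?thesis using assms by (cases "a = 0") (auto simp: mod_if)
next
  case False
  then have "b + 1 < k" using assms by simp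
  then show ?thesis using assms by (cases "a = 0") (auto simp: mod_if)
qed

lemma cyclic_difference_le:
  fixes x M M' :: "nat \<Rightarrow> int" and m :: int
  assumes "0 < k"
    and step: "\<And>y. y < k \<Longrightarrow> M' y - M y = x ((y + k - 1) mod k) - x y"
    and nonneg: "\<And>y. y < k \<Longrightarrow> 0 \<le> M y" "\<And>y. y < k \<Longrightarrow> 0 \<le> M' y"
    and total: "(\<Sum>y<k. M y) = m + 1" "(\<Sum>y<k. M' y) = m + 1"
    and common: "e < k" "1 \<le> M e" "1 \<le> M' e"
    and "a < k" "b < k"
  shows "x a - x b \<le> m"
proof -
  define f where "f j = (Suc a + j) mod k" for j
  have f_bij: "bij_betw f {..<k} {..<k}"
    unfolding f_def by (rule bij_betw_add_mod)
  have telescope: "x a - x ((a + r) mod k) = (\<Sum>j<r. M' (f j) - M (f j))" for r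
  proof (induction r)
    case 0
    then show ?case using \<open>a < k\<close> by simp
  next
    case (Suc r)
    have "M' (f r) - M (f r) = x ((a + r) mod k) - x ((a + Suc r) mod k)"
      using step[of "f r"] pred_mod_Suc_mod[OF \<open>0 < k\<close>, of "a + r"] \<open>0 < k\<close>
      by (simp add: f_def)
    then show ?case using Suc.IH by simp
  qed
  have "b \<in> (\<lambda>j. (a + j) mod k) ` {..<k}"
    using bij_betw_imp_surj_on[OF bij_betw_add_mod] \<open>b < k\<close> by simp
  then obtain r where r: "r < k" "(a + r) mod k = b" by auto
  have "e \<in> f ` {..<k}"
    using bij_betw_imp_surj_on[OF f_bij] \<open>e < k\<close> by simp
  then obtain j\<^sub>e where je: "j\<^sub>e < k" "f j\<^sub>e = e" by auto
  have split: "(\<Sum>j<r. g (f j)) + (\<Sum>j=r..<k. g (f j)) = m + 1"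
    if "(\<Sum>y<k. g y) = m + 1" for g
    using sum.atLeastLessThan_concat[of 0 r k "g \<circ> f"] \<open>r < k\<close> that
      sum.reindex_bij_betw[OF f_bij, of g]
    by (simp add: atLeast0LessThan)
  have f_less: "f j < k" for j using \<open>0 < k\<close> by (simp add: f_def)
  have diff: "x a - x b = (\<Sum>j<r. M' (f j)) - (\<Sum>j<r. M (f j))"
    using telescope[of r] r(2) by (simp add: sum_subtractf)
  show ?thesis
  proof (cases "j\<^sub>e < r")
    case True
    have "M e \<le> (\<Sum>j<r. M (f j))"
      using member_le_sum[of j\<^sub>e "{..<r}" "M \<circ> f"] True je nonneg(1) f_less by simp
    moreover have "0 \<le> (\<Sum>j=r..<k. M' (f j))"
      using nonneg(2) f_less by (simp add: sum_nonneg)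
    ultimately show ?thesis using diff split[OF total(2)] common by linarith
  next
    case False
    have "M' e \<le> (\<Sum>j=r..<k. M' (f j))"
      using member_le_sum[of j\<^sub>e "{r..<k}" "M' \<circ> f"] False je nonneg(2) f_less by simp
    moreover have "0 \<le> (\<Sum>j<r. M (f j))"
      using nonneg(1) f_less by (simp add: sum_nonneg)
    ultimately show ?thesis using diff split[OF total(2)] common by linarith
  qed
qed

definition weight :: "(nat list \<Rightarrow> nat) \<Rightarrow> nat list \<Rightarrow> nat \<Rightarrow> int" where
  "weight d s a = int (count_list s a) + of_bool (d s = a)"

lemma weight_nonneg: "0 \<le> weight d s a"
  by (simp add: weight_def)

lemma sum_weight:
  assumes "s \<in> strings k n" "d s < k"
  shows "(\<Sum>a<k. weight d s a) = int n + 1"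
proof -
  have "set s \<subseteq> {..<k}" "length s = n" using assms(1) by (auto simp: strings_def)
  then have "(\<Sum>a<k. int (count_list s a)) = int n"
    by (simp add: sum_count_set flip: of_nat_sum)
  moreover have "(\<Sum>a<k. of_bool (d s = a) :: int) = 1" using assms(2) by simp
  ultimately show ?thesis by (simp add: weight_def sum.distrib)
qed

lemma weight_valid_arc:
  assumes "valid_arc k n d s t" "1 \<le> n"
  shows "weight d t a = weight d s a - of_bool (s ! 0 = a) + of_bool ((s ! 0 + 1) mod k = a)"
proof -
  have len: "length s = n" "length t = n" and shift: "drop 1 s = take (n - 1) t"
    using assms(1) by (auto simp: valid_arc_def db_arc_def strings_def)
  obtain b u where s: "s = b # u" using len(1) assms(2) by (cases s) auto
  define c where "c = t ! (n - 1)"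
  have t: "t = u @ [c]"
    using shift len(2) assms(2) take_Suc_conv_app_nth[of "n - 1" t] by (simp add: s c_def)
  from assms(1) consider "(b + 1) mod k = c" "d s = d t" | "(b + 1) mod k = d t" "c = d s"
    by (auto simp: valid_arc_def Let_def s c_def)
  then show ?thesis by cases (auto simp: weight_def s t)
qed

lemma weights_share_symbol:
  assumes "s \<in> strings k n" "t \<in> strings k n" "d s < k"
    and "d s \<noteq> d t \<Longrightarrow> \<exists>c. c \<in> set s \<and> c \<in> set t"
  obtains e where "e < k" "1 \<le> weight d s e" "1 \<le> weight d t e"
proof (cases "d s = d t")
  case True
  then show ?thesis using that[of "d s"] assms(3) by (simp add: weight_def)
next
  case False
  then obtain c where c: "c \<in> set s" "c \<in> set t" using assms(4) by blast
  then have "c < k" using assms(1) by (auto simp: strings_def)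
  moreover have "0 < count_list s c" "0 < count_list t c"
    using c by (metis count_list_0_iff gr0I)+
  ultimately show ?thesis using that[of c] by (simp add: weight_def)
qed

lemma imbalance_le:
  assumes "0 < k" "\<And>a c. a < k \<Longrightarrow> c < k \<Longrightarrow> int (count_list u a) - int (count_list u c) \<le> m"
  shows "imbalance k u \<le> m"
proof -
  have counts: "{count_list u a | a. a < k} = count_list u ` {..<k}" by auto
  have "finite (count_list u ` {..<k})" "count_list u ` {..<k} \<noteq> {}" using assms(1) by auto
  then have "Max (count_list u ` {..<k}) \<in> count_list u ` {..<k}"
    "Min (count_list u ` {..<k}) \<in> count_list u ` {..<k}"
    by (blast intro: Max_in Min_in)+
  then show ?thesis using assms(2) by (auto simp: imbalance_def counts)
qed

lemma discrepancy_le: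
  assumes "w \<noteq> []" "\<And>i l. i < length w \<Longrightarrow> l \<le> length w \<Longrightarrow> imbalance k (circ_sub w i l) \<le> m"
  shows "discrepancy k w \<le> m"
proof -
  have "circ_substrings w = (\<lambda>(i, l). circ_sub w i l) ` ({..<length w} \<times> {..length w})"
    by (auto simp: circ_substrings_def)
  then have "finite (circ_substrings w)" by simp
  moreover have "circ_substrings w \<noteq> {}"
    using assms(1) by (auto simp: circ_substrings_def)
  moreover have "\<forall>u \<in> circ_substrings w. imbalance k u \<le> m"
    using assms(2) by (auto simp: circ_substrings_def)
  ultimately show ?thesis
    by (simp add: discrepancy_def Max_le_iff)
qed

lemma circ_sub_Suc: "circ_sub w i (Suc l) = circ_sub w i l @ [w ! ((i + l) mod length w)]"
  by (simp add: circ_sub_def)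

locale de_bruijn_closed_walk =
  fixes k n :: nat and cyc :: "nat list list"
  assumes n_pos: "1 \<le> n" and cyc_nonempty: "cyc \<noteq> []"
    and arcs: "\<And>i. i < length cyc \<Longrightarrow> db_arc k n (cyc ! i) (cyc ! (Suc i mod length cyc))"
begin

definition heads :: "nat list" where
  "heads = map (\<lambda>s. s ! 0) cyc"

lemma length_heads [simp]: "length heads = length cyc"
  by (simp add: heads_def)

lemma arc_mod: "db_arc k n (cyc ! (m mod length cyc)) (cyc ! (Suc m mod length cyc))"
  using arcs[of "m mod length cyc"] cyc_nonempty by (simp add: mod_Suc_eq)

lemma cyc_mod_in_strings: "cyc ! (m mod length cyc) \<in> strings k n"
  using arc_mod by (simp add: db_arc_def)

lemma heads_mod: "heads ! (m mod length cyc) = cyc ! (m mod length cyc) ! 0"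
  using cyc_nonempty by (simp add: heads_def)

lemma heads_mod_less: "heads ! (m mod length cyc) < k"
proof -
  define s where "s = cyc ! (m mod length cyc)"
  have "s \<in> strings k n" using cyc_mod_in_strings by (simp add: s_def)
  moreover from this have "s ! 0 \<in> set s" using n_pos by (simp add: strings_def)
  ultimately show ?thesis by (auto simp: strings_def heads_mod s_def)
qed

lemma heads_shift: "j < n \<Longrightarrow> heads ! ((i + j) mod length cyc) = cyc ! (i mod length cyc) ! j"
proof (induction j arbitrary: i)
  case 0
  then show ?case by (simp add: heads_mod)
next
  case (Suc j)
  have "drop 1 (cyc ! (i mod length cyc)) = take (n - 1) (cyc ! (Suc i mod length cyc))"
    and "length (cyc ! (i mod length cyc)) = n"
    using arc_mod[of i] by (auto simp: db_arc_def strings_def)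
  then have "cyc ! (Suc i mod length cyc) ! j = drop 1 (cyc ! (i mod length cyc)) ! j"
    using Suc.prems by simp
  also have "\<dots> = cyc ! (i mod length cyc) ! Suc j"
    using Suc.prems \<open>length (cyc ! (i mod length cyc)) = n\<close> by simp
  finally show ?case using Suc.IH[of "Suc i"] Suc.prems by simp
qed

lemma circ_sub_heads: "circ_sub heads i n = cyc ! (i mod length cyc)"
  using cyc_mod_in_strings[of i]
  by (intro nth_equalityI) (auto simp: circ_sub_def strings_def heads_shift)

lemma de_bruijn_seq_heads:
  assumes "distinct cyc" "set cyc = strings k n"
  shows "de_bruijn_seq k n heads"
  unfolding de_bruijn_seq_def
proof (intro conjI ballI)
  have "card (strings k n) = k ^ n"
    using card_lists_length_eq[of "{..<k}" n] by (simp add: strings_def conj_commute)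
  then show "length heads = k ^ n"
    using distinct_card[OF assms(1)] assms(2) by simp
  show "set heads \<subseteq> {..<k}"
  proof
    fix x assume "x \<in> set heads"
    then obtain m where "m < length cyc" "x = heads ! m" by (auto simp: in_set_conv_nth)
    then show "x \<in> {..<k}" using heads_mod_less[of m] by simp
  qed
next
  fix x assume "x \<in> strings k n"
  then obtain p where p: "p < length cyc" "cyc ! p = x"
    using assms(2) by (metis in_set_conv_nth)
  have "circ_sub heads i n = x \<longleftrightarrow> i = p" if "i < length cyc" for i
    using that p assms(1) by (auto simp: circ_sub_heads nth_eq_iff_index_eq)
  then have "{i. i < length heads \<and> circ_sub heads i n = x} = {p}"
    using p(1) by auto
  then show "card {i. i < length heads \<and> circ_sub heads i n = x} = 1" by simp
qed

end

locale valid_closed_walk = de_bruijn_closed_walk +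
  fixes d :: "nat list \<Rightarrow> nat"
  assumes valid_arcs:
    "\<And>i. i < length cyc \<Longrightarrow> valid_arc k n d (cyc ! i) (cyc ! (Suc i mod length cyc))"
begin

lemma valid_arc_mod: "valid_arc k n d (cyc ! (m mod length cyc)) (cyc ! (Suc m mod length cyc))"
  using valid_arcs[of "m mod length cyc"] cyc_nonempty by (simp add: mod_Suc_eq)

lemma weight_difference_circ_sub:
  assumes "a < k"
  shows "weight d (cyc ! ((i + l) mod length cyc)) a - weight d (cyc ! (i mod length cyc)) a
    = int (count_list (circ_sub heads i l) ((a + k - 1) mod k))
      - int (count_list (circ_sub heads i l) a)"
proof (induction l)
  case 0
  then show ?case by (simp add: circ_sub_def)
next
  case (Suc l)
  define b where "b = heads ! ((i + l) mod length cyc)"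
  have "b < k" using heads_mod_less by (simp add: b_def)
  have "weight d (cyc ! ((i + Suc l) mod length cyc)) a
      = weight d (cyc ! ((i + l) mod length cyc)) a - of_bool (b = a) + of_bool ((a + k - 1) mod k = b)"
    using weight_valid_arc[OF valid_arc_mod[of "i + l"] n_pos, of a]
      Suc_mod_eq_iff_pred_mod[OF \<open>a < k\<close> \<open>b < k\<close>]
    by (simp add: b_def heads_mod)
  then show ?case using Suc.IH by (simp add: circ_sub_Suc b_def)
qed

lemma imbalance_circ_sub_heads_le:
  assumes depth: "\<And>s. s \<in> strings k n \<Longrightarrow> d s < k"
    and share: "\<And>s t. s \<in> strings k n \<Longrightarrow> t \<in> strings k n \<Longrightarrow> d s \<noteq> d t
      \<Longrightarrow> \<exists>c. c \<in> set s \<and> c \<in> set t"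
  shows "imbalance k (circ_sub heads i l) \<le> int n"
proof (rule imbalance_le)
  define s t u where "s = cyc ! (i mod length cyc)" and "t = cyc ! ((i + l) mod length cyc)"
    and "u = circ_sub heads i l"
  have st: "s \<in> strings k n" "t \<in> strings k n" using cyc_mod_in_strings by (simp_all add: s_def t_def)
  show "0 < k" using heads_mod_less[of 0] by simp
  obtain e where e: "e < k" "1 \<le> weight d s e" "1 \<le> weight d t e"
    using weights_share_symbol[of s k n t d] st depth[OF st(1)] share[OF st] by blast
  have step:
    "weight d t y - weight d s y = int (count_list u ((y + k - 1) mod k)) - int (count_list u y)"
    if "y < k" for y
    unfolding s_def t_def u_def using weight_difference_circ_sub[OF that] .
  show "int (count_list (circ_sub heads i l) a) - int (count_list (circ_sub heads i l) c) \<le> int n"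
    if "a < k" "c < k" for a c
    unfolding u_def[symmetric] using \<open>0 < k\<close> e that
    by (intro cyclic_difference_le[where x = "\<lambda>y. int (count_list u y)" and e = e
          and M = "weight d s" and M' = "weight d t"])
      (simp_all add: step weight_nonneg sum_weight st depth)
qed

lemma discrepancy_heads_le:
  assumes "\<And>s. s \<in> strings k n \<Longrightarrow> d s < k"
    and "\<And>s t. s \<in> strings k n \<Longrightarrow> t \<in> strings k n \<Longrightarrow> d s \<noteq> d t
      \<Longrightarrow> \<exists>c. c \<in> set s \<and> c \<in> set t"
  shows "discrepancy k heads \<le> int n"
  using discrepancy_le[OF _ imbalance_circ_sub_heads_le[OF assms]] cyc_nonempty by (simp add: heads_def)

end

theorem theorem3:
  fixes k n :: nat and d :: "nat list \<Rightarrow> nat" and cyc :: "nat list list"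
  assumes "k \<ge> 1" and "n \<ge> 1"
    and "\<forall>s \<in> strings k n. d s < k"
    and "\<forall>s \<in> strings k n. \<forall>t \<in> strings k n. d s \<noteq> d t \<longrightarrow> (\<exists>c. c \<in> set s \<and> c \<in> set t)"
    and "ham_cycle_valid k n d cyc"
  shows "de_bruijn_seq k n (map (\<lambda>s. s ! 0) cyc)
         \<and> discrepancy k (map (\<lambda>s. s ! 0) cyc) \<le> int n"
proof -
  have cyc: "distinct cyc" "set cyc = strings k n"
    and valid: "\<And>i. i < length cyc \<Longrightarrow> valid_arc k n d (cyc ! i) (cyc ! (Suc i mod length cyc))"
    using assms(5) by (auto simp: ham_cycle_valid_def)
  have "replicate n 0 \<in> set cyc" using cyc(2) assms(1,2) by (simp add: strings_def)
  then interpret valid_closed_walk k n cyc d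
    using assms(2) valid by unfold_locales (auto simp: valid_arc_def)
  show ?thesis
    using de_bruijn_seq_heads[OF cyc] discrepancy_heads_le assms(3,4)
    by (simp add: heads_def)
qed

end
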